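(* Assume the model (M.2) with $M_0>1$ and the sub-Gaussian condition (A.4) described in the context, and let Algorithm 2 be applied to $X_1,\ldots,X_N$. Let $k\in\{2,\ldots,M_0\}$ and let $\eta=\eta(N)$ be an integer with $1\le\eta\le\min\{N_{k-1},N_{k+1}\}$. Let $E_{k,N}$ be the event that there exist integers $1\le n_1\le N_k$, $1\le n_2\le\eta$, $1\le n_3\le\eta$ such that $\{X^{(k-1)}_n:n=N_{k-1}-n_3+1,\ldots,N_{k-1}\}\cup\{X^{(k)}_n:n=1,\ldots,n_1\}$ and $\{X^{(k)}_n:n=n_1+1,\ldots,N_k\}\cup\{X^{(k+1)}_n:n=1,\ldots,n_2\}$ are two detected segments. Assume $$f(N)\ge\max\{100|\mu_{k-1}-\mu_k|^2\eta,\ 100|\mu_k-\mu_{k+1}|^2\eta,\ C\log N\},$$ where $C>100D/c_0$ is a constant. Then $\Pr(\limsup_{N\to\infty}E_{k,N})=0$.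
   Context: Model (M.2): for each sample size $N$ one observes independent random vectors $X_1,\ldots,X_N\in\mathbb{R}^D$ ($D\in\mathbb{N}$ fixed). There are $M_0\ge 0$ (fixed) change points $0=L_0<L_1<\cdots<L_{M_0}<L_{M_0+1}=N$ (depending on $N$), with segment sizes $N_k=L_k-L_{k-1}$, $N_k\to\infty$; for each $k$, $X_{L_{k-1}+1},\ldots,X_{L_k}$ are i.i.d. with distribution $\mathcal{G}_k$ with mean $\mu_k$ and finite covariance; $\mu_k\neq\mu_{k+1}$. Write $X^{(k)}_n=X_{L_{k-1}+n}$, $n=1,\ldots,N_k$. (A.4): there is $c_0>0$ such that for every $k$, coordinate $d$, $n\ge1$ and $a>0$, the mean $\bar Z$ of $n$ i.i.d. copies of the $d$-th marginal of $\mathcal{G}_k$ satisfies $\Pr(|\bar Z-E\bar Z|\ge a)\le2e^{-c_0a^2n}$. Quadratic loss: $\mathrm{Loss}_q(x_a,\ldots,x_b)=\sum_{n=a}^b|x_n-\bar x|^2$, $\bar x$ the sample mean, $|\cdot|$ Euclidean norm. Algorithm 2 (inputs $M_{\max}\ge1$, penalty $f(N)>0$, minimal segment size $\beta(N)$): for $k=0,1,\ldots,M_{\max}$ compute $\hat e_k=\min\sum_{j=1}^{k+1}\mathrm{Loss}_q(x_{\ell_{j-1}+1},\ldots,x_{\ell_j})$ over $0=\ell_0<\ell_1<\cdots<\ell_{k+1}=N$ with a minimizer; if its smallest segment has size $<\beta(N)$, set $M=k-1$ and stop (else $M=M_{\max}$). Output $\hat M=\arg\min_{0\le k\le M}(\hat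 e_k+kf(N))$ and the change points $\hat\ell_1<\cdots<\hat\ell_{\hat M}$ of the minimizer for $k=\hat M$. The detected segments are the blocks $\{X_n:n=\hat\ell_{j-1}+1,\ldots,\hat\ell_j\}$, $j=1,\ldots,\hat M+1$ ($\hat\ell_0=0,\hat\ell_{\hat M+1}=N$); "two detected segments" means two neighboring ones, in the order listed. $\limsup_N E_N$ is the event that $E_N$ occurs for infinitely many $N$. *)

theory Defs
  imports "HOL-Probability.Probability"
begin

text \<open>Data are indexed 1..N: x :: nat \<Rightarrow> real^'d, the observation x n for n = 1..N.\<close>

definition seg_mean :: "(nat \<Rightarrow> real^'d) \<Rightarrow> nat \<Rightarrow> nat \<Rightarrow> real^'d" where
  "seg_mean x a b = (1 / real (b + 1 - a)) *\<^sub>R (\<Sum>n\<in>{a..b}. x n)"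

definition loss_q :: "(nat \<Rightarrow> real^'d) \<Rightarrow> nat \<Rightarrow> nat \<Rightarrow> real" where
  "loss_q x a b = (\<Sum>n\<in>{a..b}. (norm (x n - seg_mean x a b))\<^sup>2)"

text \<open>A segmentation with k change points: 0 = l 0 < l 1 < ... < l (k+1) = N
  (values of l beyond k+1 are irrelevant).\<close>
definition valid_seg :: "nat \<Rightarrow> nat \<Rightarrow> (nat \<Rightarrow> nat) \<Rightarrow> bool" where
  "valid_seg N k l \<longleftrightarrow> l 0 = 0 \<and> l (Suc k) = N \<and> (\<forall>j\<le>k. l j < l (Suc j))"

definition seg_cost :: "(nat \<Rightarrow> real^'d) \<Rightarrow> nat \<Rightarrow> (nat \<Rightarrow> nat) \<Rightarrow> real" where
  "seg_cost x k l = (\<Sum>j\<in>{1..Suc k}. loss_q x (l (j - 1) + 1) (l j))"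

definition min_seg_size :: "nat \<Rightarrow> (nat \<Rightarrow> nat) \<Rightarrow> nat" where
  "min_seg_size k l = Min ((\<lambda>j. l (Suc j) - l j) ` {..k})"

text \<open>(Mhat, lh) is a possible output of Algorithm 2 with inputs Mmax, penalty pen = f(N),
  minimal segment size beta = beta(N), on data x_1..x_N, for SOME choice of minimizers
  (sel k) and some choice of argmin. K is the last value of k for which the loop computed
  a minimizer; Mst is the value M at which the loop ended (nat convention: 0 - 1 = 0).\<close>
definition alg2_output ::
  "nat \<Rightarrow> real \<Rightarrow> nat \<Rightarrow> nat \<Rightarrow> (nat \<Rightarrow> real^'d) \<Rightarrow> nat \<Rightarrow> (nat \<Rightarrow> nat) \<Rightarrow> bool" where
  "alg2_output Mmax pen beta N x Mhat lh \<longleftrightarrow>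
     (\<exists>sel :: nat \<Rightarrow> nat \<Rightarrow> nat. \<exists>K Mst.
        K \<le> Mmax \<and>
        (\<forall>k\<le>K. valid_seg N k (sel k) \<and>
                 (\<forall>l. valid_seg N k l \<longrightarrow> seg_cost x k (sel k) \<le> seg_cost x k l)) \<and>
        (\<forall>k<K. beta \<le> min_seg_size k (sel k)) \<and>
        (if beta \<le> min_seg_size K (sel K) then K = Mmax \<and> Mst = Mmax else Mst = K - 1) \<and>
        Mhat \<le> Mst \<and>
        (\<forall>k\<le>Mst. seg_cost x Mhat (sel Mhat) + real Mhat * pen
                   \<le> seg_cost x k (sel k) + real k * pen) \<and>
        (\<forall>j\<le>Suc Mhat. lh j = sel Mhat j))"

end

theory Submission
  imports Defs
begin

text \<open>Suppose two neighbouring detected segments cover the whole k-th true segment and stick out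
  by n3, n2 \<le> \<eta> observations into its neighbours. Deleting the change point between them gives a
  segmentation with one change point fewer, so optimality of the minimizers and of the penalized
  choice of the number of change points bounds the penalty f(N) by the increase of the quadratic
  loss caused by the merge. That increase is at most the squared centred sums of the two pieces
  divided by their lengths, and each piece is made of at most two blocks lying inside true
  segments. If every such block sum is of order sqrt(length * log N) in each coordinate, the
  increase is below 24 D log N / c0 + 3 \<eta> |\<mu>(k-1) - \<mu>(k)|^2 + 3 \<eta> |\<mu>(k+1) - \<mu>(k)|^2 < f(N).
  With the threshold 4 log N / c0, condition (A.4) and a union bound over the O(N^2) blocks show that
  this fails with probability O(N^-2), and Borel-Cantelli concludes.\<close>

lemma sum_sq_dist_eq_loss_q:
  fixes x :: "nat \<Rightarrow> real^'d"
  assumes "p \<le> q"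
  shows "(\<Sum>n=p..q. (norm (x n - c))\<^sup>2)
       = loss_q x p q + (norm (\<Sum>n=p..q. x n - c))\<^sup>2 / real (Suc q - p)"
proof -
  define m where "m = real (Suc q - p)"
  define mu where "mu = seg_mean x p q"
  have m_pos: "m > 0" using assms by (simp add: m_def)
  have sum_eq: "(\<Sum>n=p..q. x n) = m *\<^sub>R mu"
    using m_pos by (simp add: mu_def seg_mean_def m_def)
  have "(\<Sum>n=p..q. (norm (x n - c))\<^sup>2)
      = (\<Sum>n=p..q. (norm (x n - mu))\<^sup>2 + 2 * inner (x n - mu) (mu - c) + (norm (mu - c))\<^sup>2)"
  proof (rule sum.cong[OF refl])
    fix n
    have "x n - c = (x n - mu) + (mu - c)" by simp
    then show "(norm (x n - c))\<^sup>2 = (norm (x n - mu))\<^sup>2 + 2 * inner (x n - mu) (mu - c) + (norm (mu - c))\<^sup>2"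
      by (simp only: power2_norm_eq_inner inner_add_left inner_add_right inner_commute)
  qed
  also have "\<dots> = loss_q x p q + 2 * inner (\<Sum>n=p..q. x n - mu) (mu - c) + m * (norm (mu - c))\<^sup>2"
    by (simp add: sum.distrib loss_q_def mu_def m_def sum_distrib_left inner_sum_left)
  also have "(\<Sum>n=p..q. x n - mu) = 0"
    by (simp add: sum_subtractf sum_eq m_def sum_constant_scaleR del: sum_constant)
  also have "m * (norm (mu - c))\<^sup>2 = (norm (\<Sum>n=p..q. x n - c))\<^sup>2 / real (Suc q - p)"
  proof -
    have "(\<Sum>n=p..q. x n - c) = m *\<^sub>R (mu - c)"
      by (simp add: sum_subtractf sum_eq m_def sum_constant_scaleR scaleR_diff_right del: sum_constant)
    then show ?thesis using m_pos by (simp add: m_def[symmetric] power2_eq_square)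
  qed
  finally show ?thesis by simp
qed

lemma loss_q_le_merge:
  fixes x :: "nat \<Rightarrow> real^'d"
  assumes "p \<le> r" "r < q"
  shows "loss_q x p q \<le> loss_q x p r + loss_q x (Suc r) q
     + (norm (\<Sum>n=p..r. x n - c))\<^sup>2 / real (Suc r - p)
     + (norm (\<Sum>n=Suc r..q. x n - c))\<^sup>2 / real (Suc q - Suc r)"
proof -
  have "loss_q x p q \<le> (\<Sum>n=p..q. (norm (x n - c))\<^sup>2)"
    using sum_sq_dist_eq_loss_q[of p q x c] assms by simp
  also have "\<dots> = (\<Sum>n=p..r. (norm (x n - c))\<^sup>2) + (\<Sum>n=Suc r..q. (norm (x n - c))\<^sup>2)"
    using assms by (subst sum.union_disjoint[symmetric]) (auto intro!: sum.cong)
  also have "\<dots> = loss_q x p r + loss_q x (Suc r) q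
     + (norm (\<Sum>n=p..r. x n - c))\<^sup>2 / real (Suc r - p)
     + (norm (\<Sum>n=Suc r..q. x n - c))\<^sup>2 / real (Suc q - Suc r)"
    using sum_sq_dist_eq_loss_q[of p r x c] sum_sq_dist_eq_loss_q[of "Suc r" q x c] assms by simp
  finally show ?thesis .
qed

lemma sum_atLeastAtMost_split_at:
  fixes h :: "nat \<Rightarrow> 'b::comm_monoid_add"
  assumes "m \<le> j" "j \<le> n"
  shows "sum h {m..n} = sum h {m..<j} + h j + sum h {Suc j..n}"
proof -
  have "{m..n} = {m..<j} \<union> {j..n}" using assms by auto
  then have "sum h {m..n} = sum h {m..<j} + sum h {j..n}"
    by (simp, subst sum.union_disjoint) auto
  also have "sum h {j..n} = h j + sum h {Suc j..n}"
    using assms by (simp add: sum.atLeast_Suc_atMost)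
  finally show ?thesis by (simp add: add.assoc)
qed

lemma valid_seg_delete:
  assumes v: "valid_seg N (Suc K) l" and j: "1 \<le> j" "j \<le> Suc K"
  shows "valid_seg N K (\<lambda>i. if i < j then l i else l (Suc i))"
  unfolding valid_seg_def
proof (intro conjI allI impI)
  have step: "\<And>i. i \<le> Suc K \<Longrightarrow> l i < l (Suc i)" using v by (simp add: valid_seg_def)
  fix i assume "i \<le> K"
  then show "(if i < j then l i else l (Suc i)) < (if Suc i < j then l (Suc i) else l (Suc (Suc i)))"
    using step[of i] step[of "Suc i"] by auto
qed (use v j in \<open>auto simp: valid_seg_def\<close>)

lemma seg_cost_delete:
  fixes x :: "nat \<Rightarrow> real^'d"
  assumes j: "1 \<le> j" "j \<le> Suc K"
  shows "seg_cost x K (\<lambda>i. if i < j then l i else l (Suc i))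
           + loss_q x (l (j - 1) + 1) (l j) + loss_q x (l j + 1) (l (Suc j))
         = seg_cost x (Suc K) l + loss_q x (l (j - 1) + 1) (l (Suc j))"
proof -
  define l' where "l' = (\<lambda>i. if i < j then l i else l (Suc i))"
  define g where "g = (\<lambda>i. loss_q x (l (i - 1) + 1) (l i))"
  define g' where "g' = (\<lambda>i. loss_q x (l' (i - 1) + 1) (l' i))"
  have "seg_cost x K l' = sum g' {1..<j} + g' j + sum g' {Suc j..Suc K}"
    unfolding seg_cost_def g'_def[symmetric] by (rule sum_atLeastAtMost_split_at[OF j])
  also have "sum g' {1..<j} = sum g {1..<j}"
    by (rule sum.cong) (auto simp: g_def g'_def l'_def)
  also have "g' j = loss_q x (l (j - 1) + 1) (l (Suc j))"
    using j by (simp add: g'_def l'_def)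
  also have "sum g' {Suc j..Suc K} = sum g {Suc (Suc j)..Suc (Suc K)}"
    by (subst sum.shift_bounds_cl_Suc_ivl) (auto simp: g_def g'_def l'_def intro!: sum.cong)
  finally have "seg_cost x K l' + g j + g (Suc j)
      = (sum g {1..<j} + g j + (g (Suc j) + sum g {Suc (Suc j)..Suc (Suc K)}))
        + loss_q x (l (j - 1) + 1) (l (Suc j))"
    by (simp add: algebra_simps)
  also have "g (Suc j) + sum g {Suc (Suc j)..Suc (Suc K)} = sum g {Suc j..Suc (Suc K)}"
    by (rule sum.atLeast_Suc_atMost[symmetric]) (use j in simp)
  also have "sum g {1..<j} + g j + \<dots> = seg_cost x (Suc K) l"
    unfolding seg_cost_def g_def[symmetric] by (rule sum_atLeastAtMost_split_at[symmetric]) (use j in auto)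
  finally show ?thesis by (simp add: l'_def g_def)
qed

lemma alg2_output_penalty_le_merge_gain:
  fixes x :: "nat \<Rightarrow> real^'d"
  assumes out: "alg2_output Mmax pen beta N x Mh lh" and j: "1 \<le> j" "j \<le> Mh"
  shows "pen \<le> loss_q x (lh (j - 1) + 1) (lh (Suc j))
               - loss_q x (lh (j - 1) + 1) (lh j) - loss_q x (lh j + 1) (lh (Suc j))"
proof -
  obtain sel K Mst where
      opt: "\<forall>k\<le>K. valid_seg N k (sel k) \<and>
                 (\<forall>l. valid_seg N k l \<longrightarrow> seg_cost x k (sel k) \<le> seg_cost x k l)"
    and stop: "if beta \<le> min_seg_size K (sel K) then K = Mmax \<and> Mst = Mmax else Mst = K - 1"
    and Mh_le: "Mh \<le> Mst"
    and argmin: "\<forall>k\<le>Mst. seg_cost x Mh (sel Mh) + real Mh * pen \<le> seg_cost x k (sel k) + real k * pen"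
    and lh: "\<forall>i\<le>Suc Mh. lh i = sel Mh i"
    using out unfolding alg2_output_def by blast
  obtain K' where K': "Mh = Suc K'" using j by (cases Mh) auto
  have "Mst \<le> K" using stop by (auto split: if_splits)
  then have valid: "valid_seg N (Suc K') lh"
    using opt Mh_le lh K' by (auto simp: valid_seg_def)
  define l' where "l' = (\<lambda>i. if i < j then lh i else lh (Suc i))"
  have "seg_cost x K' (sel K') \<le> seg_cost x K' l'"
    using opt valid_seg_delete[OF valid j(1)] j K' Mh_le \<open>Mst \<le> K\<close> by (auto simp: l'_def)
  moreover have "seg_cost x Mh lh = seg_cost x Mh (sel Mh)"
    unfolding seg_cost_def by (rule sum.cong) (use lh in auto)
  then have "seg_cost x (Suc K') lh + real (Suc K') * pen \<le> seg_cost x K' (sel K') + real K' * pen"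
    using argmin Mh_le K' by auto
  ultimately show ?thesis
    using seg_cost_delete[of j K' x lh] j K' by (simp add: l'_def algebra_simps)
qed

lemma norm_sq_le_card_mult:
  fixes v :: "real^'d"
  assumes "\<And>d. (v $ d)\<^sup>2 \<le> b"
  shows "(norm v)\<^sup>2 \<le> real CARD('d) * b"
proof -
  have "(norm v)\<^sup>2 = (\<Sum>d\<in>UNIV. (v $ d)\<^sup>2)"
    by (simp add: norm_vec_def L2_set_def sum_nonneg)
  also have "\<dots> \<le> (\<Sum>d\<in>(UNIV::'d set). b)"
    by (rule sum_mono) (rule assms)
  finally show ?thesis by simp
qed

lemma norm_add_scaleR_add_sq_div_le:
  fixes U v W :: "'a::real_normed_vector"
  assumes U: "(norm U)\<^sup>2 \<le> T * A" and W: "(norm W)\<^sup>2 \<le> T * B"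
    and "0 \<le> g" "g \<le> A + B" "0 < A + B"
  shows "(norm (U + g *\<^sub>R v + W))\<^sup>2 / (A + B) \<le> 3 * T + 3 * g * (norm v)\<^sup>2"
proof -
  have "norm (U + g *\<^sub>R v + W) \<le> norm U + g * norm v + norm W"
    using norm_triangle_ineq[of "U + g *\<^sub>R v" W] norm_triangle_ineq[of U "g *\<^sub>R v"] \<open>0 \<le> g\<close>
    by simp
  then have "(norm (U + g *\<^sub>R v + W))\<^sup>2 \<le> (norm U + g * norm v + norm W)\<^sup>2"
    by (simp add: power_mono)
  also have "\<dots> \<le> 3 * ((norm U)\<^sup>2 + g\<^sup>2 * (norm v)\<^sup>2 + (norm W)\<^sup>2)"
    using sum_squares_ge_zero[of "norm U - g * norm v" "g * norm v - norm W"]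
      zero_le_power2[of "norm U - norm W"]
    by (simp add: power2_eq_square algebra_simps)
  also have "g\<^sup>2 * (norm v)\<^sup>2 \<le> g * (A + B) * (norm v)\<^sup>2"
    using assms by (simp add: power2_eq_square mult_left_mono mult_right_mono)
  finally have "(norm (U + g *\<^sub>R v + W))\<^sup>2 \<le> (3 * T + 3 * g * (norm v)\<^sup>2) * (A + B)"
    using U W by (simp add: algebra_simps)
  then show ?thesis using \<open>0 < A + B\<close> by (simp add: divide_le_eq)
qed

lemma sum_diff_two_means:
  fixes x :: "nat \<Rightarrow> 'a::real_vector"
  assumes "p \<le> Suc a" "a \<le> q"
  shows "(\<Sum>n=p..q. x n - c) = (\<Sum>n=p..a. x n - m1) + real (Suc a - p) *\<^sub>R (m1 - c)
           + (\<Sum>n=Suc a..q. x n - m2) + real (q - a) *\<^sub>R (m2 - c)"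
proof -
  have recenter: "(\<Sum>n\<in>I. x n - c) = (\<Sum>n\<in>I. x n - m) + real (card I) *\<^sub>R (m - c)" for I m
    by (simp add: sum_subtractf sum_constant_scaleR scaleR_diff_right del: sum_constant)
  have "{p..q} = {p..a} \<union> {Suc a..q}" using assms by auto
  then have "(\<Sum>n=p..q. x n - c) = (\<Sum>n=p..a. x n - c) + (\<Sum>n=Suc a..q. x n - c)"
    by (simp, subst sum.union_disjoint) auto
  then show ?thesis
    using recenter[of "{p..a}" m1] recenter[of "{Suc a..q}" m2] by simp
qed

lemma norm_sum_two_means_sq_le:
  fixes x :: "nat \<Rightarrow> 'a::real_normed_vector"
  assumes "p \<le> Suc a" "a < q"
    and U: "(norm (\<Sum>n=p..a. x n - m1))\<^sup>2 \<le> T * real (Suc a - p)"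
    and W: "(norm (\<Sum>n=Suc a..q. x n - m2))\<^sup>2 \<le> T * real (q - a)"
  shows "(norm (\<Sum>n=p..q. x n - m2))\<^sup>2 / real (Suc q - p) \<le> 3 * T + 3 * real (Suc a - p) * (norm (m1 - m2))\<^sup>2"
    and "(norm (\<Sum>n=p..q. x n - m1))\<^sup>2 / real (Suc q - p) \<le> 3 * T + 3 * real (q - a) * (norm (m2 - m1))\<^sup>2"
proof -
  have len: "real (Suc q - p) = real (Suc a - p) + real (q - a)"
    using assms by auto
  have "(\<Sum>n=p..q. x n - m2) = (\<Sum>n=p..a. x n - m1) + real (Suc a - p) *\<^sub>R (m1 - m2) + (\<Sum>n=Suc a..q. x n - m2)"
    using sum_diff_two_means[of p a q x m2 m1 m2] assms by simp
  then show "(norm (\<Sum>n=p..q. x n - m2))\<^sup>2 / real (Suc q - p) \<le> 3 * T + 3 * real (Suc a - p) * (norm (m1 - m2))\<^sup>2"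
    unfolding len by (simp only:) (rule norm_add_scaleR_add_sq_div_le[OF U W]; use assms in auto)
  have "(\<Sum>n=p..q. x n - m1) = (\<Sum>n=p..a. x n - m1) + real (q - a) *\<^sub>R (m2 - m1) + (\<Sum>n=Suc a..q. x n - m2)"
    using sum_diff_two_means[of p a q x m1 m1 m2] assms by simp
  then show "(norm (\<Sum>n=p..q. x n - m1))\<^sup>2 / real (Suc q - p) \<le> 3 * T + 3 * real (q - a) * (norm (m2 - m1))\<^sup>2"
    unfolding len by (simp only:) (rule norm_add_scaleR_add_sq_div_le[OF U W]; use assms in auto)
qed

definition blocks_concentrated ::
  "(nat \<Rightarrow> nat) \<Rightarrow> (nat \<Rightarrow> real^'d) \<Rightarrow> nat \<Rightarrow> real \<Rightarrow> (nat \<Rightarrow> real^'d) \<Rightarrow> bool" where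
  "blocks_concentrated l \<mu> m t x \<longleftrightarrow>
     (\<forall>j\<in>{1..m}. \<forall>s e d. l (j - 1) < s \<and> s \<le> e \<and> e \<le> l j \<longrightarrow>
        (\<Sum>i=s..e. x i $ d - \<mu> j $ d)\<^sup>2 \<le> t * real (Suc e - s))"

lemma blocks_concentrated_norm_le:
  fixes x :: "nat \<Rightarrow> real^'d"
  assumes "blocks_concentrated l \<mu> m t x" "j \<in> {1..m}" "l (j - 1) < s" "e \<le> l j"
  shows "(norm (\<Sum>i=s..e. x i - \<mu> j))\<^sup>2 \<le> real CARD('d) * t * real (Suc e - s)"
proof (cases "s \<le> e")
  case True
  have "((\<Sum>i=s..e. x i - \<mu> j) $ d)\<^sup>2 \<le> t * real (Suc e - s)" for d
  proof -
    have "(\<Sum>i=s..e. x i $ d - \<mu> j $ d)\<^sup>2 \<le> t * real (Suc e - s)"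
      using assms True unfolding blocks_concentrated_def by blast
    then show ?thesis by simp
  qed
  then show ?thesis by (simp add: norm_sq_le_card_mult mult.assoc)
qed simp

lemma penalty_le_of_blocks_concentrated:
  fixes x :: "nat \<Rightarrow> real^'d" and l :: "nat \<Rightarrow> nat"
  assumes out: "alg2_output Mmax pen beta N x Mh lh" and j: "1 \<le> j" "j \<le> Mh"
    and conc: "blocks_concentrated l \<mu> m t x" and k: "2 \<le> k" "Suc k \<le> m"
    and lh: "lh (j - 1) = l (k - 1) - n3" "lh j = l (k - 1) + n1" "lh (Suc j) = l k + n2"
    and n1: "1 \<le> n1" "n1 \<le> l k - l (k - 1)"
    and n2: "1 \<le> n2" "n2 \<le> l (Suc k) - l k"
    and n3: "1 \<le> n3" "n3 \<le> l (k - 1) - l (k - 2)"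
  shows "pen \<le> 6 * (real CARD('d) * t) + 3 * real n3 * (norm (\<mu> (k - 1) - \<mu> k))\<^sup>2
               + 3 * real n2 * (norm (\<mu> (Suc k) - \<mu> k))\<^sup>2"
proof -
  define a b where "a = l (k - 1)" and "b = l k"
  define p r q where "p = Suc (a - n3)" and "r = a + n1" and "q = b + n2"
  define T where "T = real CARD('d) * t"
  have k_in: "k - 1 \<in> {1..m}" "k \<in> {1..m}" "Suc k \<in> {1..m}" and km: "k - 1 - 1 = k - 2"
    using k by auto
  have ineqs: "p \<le> a" "Suc a - p = n3" "l (k - 2) < p" "a < r" "r \<le> b" "r - a = n1" "r < q" "q - b = n2"
    using n1 n2 n3 by (auto simp: p_def r_def q_def a_def b_def)
  have "pen \<le> loss_q x p q - loss_q x p r - loss_q x (Suc r) q"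
    using alg2_output_penalty_le_merge_gain[OF out j] lh by (simp add: p_def r_def q_def a_def b_def)
  also have "\<dots> \<le> (norm (\<Sum>n=p..r. x n - \<mu> k))\<^sup>2 / real (Suc r - p)
                 + (norm (\<Sum>n=Suc r..q. x n - \<mu> k))\<^sup>2 / real (Suc q - Suc r)"
    using loss_q_le_merge[of p r q x "\<mu> k"] ineqs by simp
  also have "(norm (\<Sum>n=p..r. x n - \<mu> k))\<^sup>2 / real (Suc r - p)
      \<le> 3 * T + 3 * real n3 * (norm (\<mu> (k - 1) - \<mu> k))\<^sup>2"
  proof -
    have "(norm (\<Sum>n=p..a. x n - \<mu> (k - 1)))\<^sup>2 \<le> T * real (Suc a - p)"
      using blocks_concentrated_norm_le[OF conc k_in(1), of p a] ineqs km by (simp add: T_def a_def)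
    moreover have "(norm (\<Sum>n=Suc a..r. x n - \<mu> k))\<^sup>2 \<le> T * real (r - a)"
      using blocks_concentrated_norm_le[OF conc k_in(2), of "Suc a" r] ineqs
      by (simp add: T_def a_def b_def)
    ultimately show ?thesis
      using norm_sum_two_means_sq_le(1)[of p a r] ineqs by simp
  qed
  also have "(norm (\<Sum>n=Suc r..q. x n - \<mu> k))\<^sup>2 / real (Suc q - Suc r)
      \<le> 3 * T + 3 * real n2 * (norm (\<mu> (Suc k) - \<mu> k))\<^sup>2"
  proof -
    have "(norm (\<Sum>n=Suc r..b. x n - \<mu> k))\<^sup>2 \<le> T * real (Suc b - Suc r)"
      using blocks_concentrated_norm_le[OF conc k_in(2), of "Suc r" b] ineqs
      by (simp add: T_def a_def b_def)
    moreover have "(norm (\<Sum>n=Suc b..q. x n - \<mu> (Suc k)))\<^sup>2 \<le> T * real (q - b)"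
      using blocks_concentrated_norm_le[OF conc k_in(3), of "Suc b" q] n2
      by (simp add: T_def b_def q_def)
    ultimately show ?thesis
      using norm_sum_two_means_sq_le(2)[of "Suc r" b q x "\<mu> k" T "\<mu> (Suc k)"] ineqs n2
      by (simp add: q_def)
  qed
  finally show ?thesis by (simp add: T_def algebra_simps)
qed

lemma alg2_output_no_pair_around_segment:
  fixes x :: "nat \<Rightarrow> real^'d" and l :: "nat \<Rightarrow> nat"
  assumes out: "alg2_output Mmax pen beta N x Mh lh"
    and conc: "blocks_concentrated l \<mu> m t x" and k: "2 \<le> k" "Suc k \<le> m"
    and eta: "\<eta> \<le> l (k - 1) - l (k - 2)" "\<eta> \<le> l (Suc k) - l k"
    and pen: "6 * (real CARD('d) * t) + 3 * real \<eta> * (norm (\<mu> (k - 1) - \<mu> k))\<^sup>2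
                + 3 * real \<eta> * (norm (\<mu> (Suc k) - \<mu> k))\<^sup>2 < pen"
  shows "\<not> (\<exists>j n1 n2 n3. 1 \<le> j \<and> j \<le> Mh \<and> 1 \<le> n1 \<and> n1 \<le> l k - l (k - 1) \<and>
            1 \<le> n2 \<and> n2 \<le> \<eta> \<and> 1 \<le> n3 \<and> n3 \<le> \<eta> \<and>
            lh (j - 1) = l (k - 1) - n3 \<and> lh j = l (k - 1) + n1 \<and> lh (Suc j) = l k + n2)"
proof
  assume "\<exists>j n1 n2 n3. 1 \<le> j \<and> j \<le> Mh \<and> 1 \<le> n1 \<and> n1 \<le> l k - l (k - 1) \<and>
            1 \<le> n2 \<and> n2 \<le> \<eta> \<and> 1 \<le> n3 \<and> n3 \<le> \<eta> \<and>
            lh (j - 1) = l (k - 1) - n3 \<and> lh j = l (k - 1) + n1 \<and> lh (Suc j) = l k + n2"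
  then obtain j n1 n2 n3 where j: "1 \<le> j" "j \<le> Mh" and n: "1 \<le> n1" "n1 \<le> l k - l (k - 1)"
      "1 \<le> n2" "n2 \<le> \<eta>" "1 \<le> n3" "n3 \<le> \<eta>"
    and lh: "lh (j - 1) = l (k - 1) - n3" "lh j = l (k - 1) + n1" "lh (Suc j) = l k + n2"
    by blast
  have "pen \<le> 6 * (real CARD('d) * t) + 3 * real n3 * (norm (\<mu> (k - 1) - \<mu> k))\<^sup>2
               + 3 * real n2 * (norm (\<mu> (Suc k) - \<mu> k))\<^sup>2"
    using n eta by (intro penalty_le_of_blocks_concentrated[OF out j conc k lh]) auto
  moreover have "real n3 * (norm (\<mu> (k - 1) - \<mu> k))\<^sup>2 \<le> real \<eta> * (norm (\<mu> (k - 1) - \<mu> k))\<^sup>2"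
    and "real n2 * (norm (\<mu> (Suc k) - \<mu> k))\<^sup>2 \<le> real \<eta> * (norm (\<mu> (Suc k) - \<mu> k))\<^sup>2"
    using n by (simp_all add: mult_right_mono)
  ultimately show False using pen by linarith
qed

lemma pred_blocks_concentrated[measurable]:
  fixes Y :: "nat \<Rightarrow> 'a \<Rightarrow> real^'d"
  assumes [measurable]: "\<And>i. Y i \<in> borel_measurable M"
  shows "Measurable.pred M (\<lambda>\<omega>. blocks_concentrated l \<mu> m t (\<lambda>i. Y i \<omega>))"
proof -
  have [measurable]: "(\<lambda>\<omega>. Y i \<omega> $ d) \<in> borel_measurable M" for i d
    by (rule measurable_compose[OF assms borel_measurable_nth])
  show ?thesis unfolding blocks_concentrated_def by measurable
qed

lemma distr_shifted_block_eq_PiM: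
  fixes M :: "'a measure" and Y :: "nat \<Rightarrow> 'a \<Rightarrow> 'b::topological_space"
  assumes "prob_space M"
    and rv: "\<And>i. Y i \<in> borel_measurable M"
    and ind: "prob_space.indep_vars M (\<lambda>_. borel) Y I" and sub: "{s..<s + m} \<subseteq> I" and "0 < m"
    and dist: "\<And>i. i < m \<Longrightarrow> distr M borel (Y (s + i)) = G"
  shows "(\<lambda>\<omega>. \<lambda>i\<in>{..<m}. Y (s + i) \<omega>) \<in> measurable M (\<Pi>\<^sub>M i\<in>{..<m}. G)"
    and "distr M (\<Pi>\<^sub>M i\<in>{..<m}. G) (\<lambda>\<omega>. \<lambda>i\<in>{..<m}. Y (s + i) \<omega>) = (\<Pi>\<^sub>M i\<in>{..<m}. G)"
proof -
  interpret prob_space M by fact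
  define J where "J = {s..<s + m}"
  define shift where "shift = (\<lambda>\<omega>. \<lambda>i\<in>{..<m}. \<omega> (s + i) :: 'b)"
  have G: "G = distr M borel (Y s)" using dist[of 0] \<open>0 < m\<close> by simp
  then have "prob_space G" by (simp add: prob_space_distr rv)
  have dist_J: "distr M borel (Y i) = G" if "i \<in> J" for i
    using that dist[of "i - s"] by (auto simp: J_def)
  have block: "distr M (\<Pi>\<^sub>M i\<in>J. borel) (\<lambda>\<omega>. \<lambda>i\<in>J. Y i \<omega>) = (\<Pi>\<^sub>M i\<in>J. G)"
  proof -
    have "indep_vars (\<lambda>_. borel) Y J" using indep_vars_subset[OF ind] sub by (simp add: J_def)
    then have "distr M (\<Pi>\<^sub>M i\<in>J. borel) (\<lambda>\<omega>. \<lambda>i\<in>J. Y i \<omega>) = (\<Pi>\<^sub>M i\<in>J. distr M borel (Y i))"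
      using indep_vars_iff_distr_eq_PiM[of J Y "\<lambda>_. borel"] rv \<open>0 < m\<close> by (simp add: J_def)
    also have "\<dots> = (\<Pi>\<^sub>M i\<in>J. G)" by (rule PiM_cong) (simp_all add: dist_J)
    finally show ?thesis .
  qed
  have reindex: "distr (\<Pi>\<^sub>M i\<in>J. G) (\<Pi>\<^sub>M i\<in>{..<m}. G) shift = (\<Pi>\<^sub>M i\<in>{..<m}. G)"
    using distr_PiM_reindex[of J "\<lambda>_. G" "\<lambda>i. s + i" "{..<m}"] \<open>prob_space G\<close>
    by (auto simp: J_def shift_def inj_on_def)
  have meas_block: "(\<lambda>\<omega>. \<lambda>i\<in>J. Y i \<omega>) \<in> measurable M (\<Pi>\<^sub>M i\<in>J. borel)"
    by (rule measurable_restrict) (simp add: rv)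
  have meas_shift: "shift \<in> measurable (\<Pi>\<^sub>M i\<in>J. borel) (\<Pi>\<^sub>M i\<in>{..<m}. G)"
  proof -
    have "sets (\<Pi>\<^sub>M i\<in>{..<m}. G) = sets (\<Pi>\<^sub>M i\<in>{..<m}. (borel :: 'b measure))"
      by (rule sets_PiM_cong) (simp_all add: G)
    moreover have "shift \<in> measurable (\<Pi>\<^sub>M i\<in>J. borel) (\<Pi>\<^sub>M i\<in>{..<m}. borel)"
      unfolding shift_def
      by (rule measurable_restrict) (auto simp: J_def intro!: measurable_component_singleton)
    ultimately show ?thesis using measurable_cong_sets by blast
  qed
  have comp: "(\<lambda>\<omega>. \<lambda>i\<in>{..<m}. Y (s + i) \<omega>) = shift \<circ> (\<lambda>\<omega>. \<lambda>i\<in>J. Y i \<omega>)"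
    by (auto simp: shift_def J_def fun_eq_iff)
  show "(\<lambda>\<omega>. \<lambda>i\<in>{..<m}. Y (s + i) \<omega>) \<in> measurable M (\<Pi>\<^sub>M i\<in>{..<m}. G)"
    unfolding comp by (rule measurable_comp[OF meas_block meas_shift])
  show "distr M (\<Pi>\<^sub>M i\<in>{..<m}. G) (\<lambda>\<omega>. \<lambda>i\<in>{..<m}. Y (s + i) \<omega>) = (\<Pi>\<^sub>M i\<in>{..<m}. G)"
    unfolding comp distr_distr[OF meas_shift meas_block, symmetric] block reindex ..
qed

lemma prob_block_sum_sq_gt_le:
  fixes Y :: "nat \<Rightarrow> 'a \<Rightarrow> real^'d"
  assumes "prob_space M"
    and rv: "\<And>i. Y i \<in> borel_measurable M"
    and ind: "prob_space.indep_vars M (\<lambda>_. borel) Y I" and sub: "{s..e} \<subseteq> I" and "s \<le> e"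
    and dist: "\<And>i. i \<in> {s..e} \<Longrightarrow> distr M borel (Y i) = G"
    and subgauss: "\<And>n a. n \<ge> 1 \<Longrightarrow> a > 0 \<Longrightarrow>
        measure (PiM {..<n} (\<lambda>_. G))
          {z \<in> space (PiM {..<n} (\<lambda>_. G)). \<bar>(\<Sum>i<n. z i $ d) / real n - \<mu> $ d\<bar> \<ge> a}
        \<le> 2 * exp (- c0 * a\<^sup>2 * real n)"
    and "0 < t"
  shows "measure M {\<omega>\<in>space M. t * real (Suc e - s) < (\<Sum>i=s..e. Y i \<omega> $ d - \<mu> $ d)\<^sup>2}
          \<le> 2 * exp (- c0 * t)"
proof -
  interpret prob_space M by fact
  define m where "m = Suc e - s"
  define W where "W = (\<lambda>\<omega>. \<lambda>i\<in>{..<m}. Y (s + i) \<omega>)"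
  define a where "a = sqrt (t / m)"
  define E where "E = {z \<in> space (PiM {..<m} (\<lambda>_. G)). \<bar>(\<Sum>i<m. z i $ d) / real m - \<mu> $ d\<bar> \<ge> a}"
  have "{s..<s + m} \<subseteq> I" "0 < m" and dist_m: "\<And>i. i < m \<Longrightarrow> distr M borel (Y (s + i)) = G"
    using sub dist \<open>s \<le> e\<close> by (auto simp: m_def)
  note W_block = distr_shifted_block_eq_PiM[OF \<open>prob_space M\<close> rv ind this, folded W_def]
  have "0 < a" and a_sq: "a\<^sup>2 * real m = t" using \<open>0 < t\<close> \<open>0 < m\<close> by (simp_all add: a_def)
  have sets_G: "sets G = sets borel" using dist_m[of 0] \<open>0 < m\<close> by auto
  have "(\<lambda>z. \<Sum>i<m. z i $ d) \<in> borel_measurable (PiM {..<m} (\<lambda>_. G))"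
    by (intro borel_measurable_sum measurable_compose[OF measurable_component_singleton])
       (auto simp: measurable_cong_sets[OF sets_G refl])
  then have "E \<in> sets (PiM {..<m} (\<lambda>_. G))"
    unfolding E_def by measurable
  have card_s_e: "card {s..e} = m" by (simp add: m_def)
  have sum_shift: "(\<Sum>i<m. W \<omega> i $ d) = (\<Sum>i=s..e. Y i \<omega> $ d)" for \<omega>
  proof -
    have "(\<Sum>i=s..e. Y i \<omega> $ d) = (\<Sum>i=s..<Suc e. Y i \<omega> $ d)"
      by (simp add: atLeastLessThanSuc_atLeastAtMost)
    also have "\<dots> = (\<Sum>i=0..<m. Y (s + i) \<omega> $ d)"
      by (simp only: sum.atLeastLessThan_shift_0[of _ s] comp_def m_def)
    finally show ?thesis by (simp add: W_def lessThan_atLeast0)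
  qed
  have "{\<omega>\<in>space M. t * real m < (\<Sum>i=s..e. Y i \<omega> $ d - \<mu> $ d)\<^sup>2} \<subseteq> W -` E \<inter> space M"
  proof
    fix \<omega> assume "\<omega> \<in> {\<omega>\<in>space M. t * real m < (\<Sum>i=s..e. Y i \<omega> $ d - \<mu> $ d)\<^sup>2}"
    then have "\<omega> \<in> space M" and big: "t * real m < (\<Sum>i=s..e. Y i \<omega> $ d - \<mu> $ d)\<^sup>2"
      by auto
    have "(\<Sum>i<m. W \<omega> i $ d) / real m - \<mu> $ d = (\<Sum>i=s..e. Y i \<omega> $ d - \<mu> $ d) / real m"
      using \<open>0 < m\<close> by (simp add: sum_shift sum_subtractf card_s_e field_simps) (simp add: m_def)
    moreover have "a\<^sup>2 < \<bar>(\<Sum>i=s..e. Y i \<omega> $ d - \<mu> $ d) / real m\<bar>\<^sup>2"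
      using big \<open>0 < m\<close> a_sq by (simp add: power_divide field_simps power2_eq_square)
    then have "a < \<bar>(\<Sum>i=s..e. Y i \<omega> $ d - \<mu> $ d) / real m\<bar>"
      by (rule power_less_imp_less_base) simp
    moreover have "W \<omega> \<in> space (PiM {..<m} (\<lambda>_. G))"
      using measurable_space[OF W_block(1) \<open>\<omega> \<in> space M\<close>] by (simp add: W_def)
    ultimately show "\<omega> \<in> W -` E \<inter> space M"
      using \<open>\<omega> \<in> space M\<close> by (simp add: E_def less_imp_le)
  qed
  then have "measure M {\<omega>\<in>space M. t * real m < (\<Sum>i=s..e. Y i \<omega> $ d - \<mu> $ d)\<^sup>2}
        \<le> measure M (W -` E \<inter> space M)"
    using W_block(1) \<open>E \<in> _\<close> by (intro finite_measure_mono) (auto intro: measurable_sets)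
  also have "\<dots> = measure (PiM {..<m} (\<lambda>_. G)) E"
    using measure_distr[OF W_block(1) \<open>E \<in> _\<close>] W_block(2) by simp
  also have "\<dots> \<le> 2 * exp (- c0 * a\<^sup>2 * real m)"
    unfolding E_def using \<open>0 < m\<close> \<open>0 < a\<close> by (intro subgauss) simp_all
  also have "\<dots> = 2 * exp (- c0 * t)" using a_sq by (simp add: mult.assoc)
  finally show ?thesis by (simp add: m_def)
qed

lemma prob_not_blocks_concentrated_le:
  fixes M :: "'a measure" and Y :: "nat \<Rightarrow> 'a \<Rightarrow> real^'d" and l :: "nat \<Rightarrow> nat"
  assumes "prob_space M"
    and rv: "\<And>i. Y i \<in> borel_measurable M"
    and ind: "prob_space.indep_vars M (\<lambda>_. borel) Y {1..N}"
    and l_le: "\<And>j. j \<in> {1..m} \<Longrightarrow> l j \<le> N"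
    and dist: "\<And>j i. j \<in> {1..m} \<Longrightarrow> l (j - 1) < i \<Longrightarrow> i \<le> l j \<Longrightarrow> distr M borel (Y i) = G j"
    and subgauss: "\<And>j d n a. j \<in> {1..m} \<Longrightarrow> n \<ge> 1 \<Longrightarrow> a > 0 \<Longrightarrow>
        measure (PiM {..<n} (\<lambda>_. G j))
          {z \<in> space (PiM {..<n} (\<lambda>_. G j)). \<bar>(\<Sum>i<n. z i $ d) / real n - \<mu> j $ d\<bar> \<ge> a}
        \<le> 2 * exp (- c0 * a\<^sup>2 * real n)"
    and "0 < t"
  shows "measure M {\<omega>\<in>space M. \<not> blocks_concentrated l \<mu> m t (\<lambda>i. Y i \<omega>)}
           \<le> real (m * N * N * CARD('d)) * (2 * exp (- c0 * t))"
proof -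
  interpret prob_space M by fact
  define dev where "dev = (\<lambda>(j, s, e, d). {\<omega>\<in>space M. l (j - 1) < s \<and> s \<le> e \<and> e \<le> l j \<and>
      t * real (Suc e - s) < (\<Sum>i=s..e. Y i \<omega> $ d - \<mu> j $ d)\<^sup>2})"
  define idx where "idx = {1..m} \<times> {1..N} \<times> {1..N} \<times> (UNIV :: 'd set)"
  have [measurable]: "(\<lambda>\<omega>. Y i \<omega> $ d) \<in> borel_measurable M" for i d
    by (rule measurable_compose[OF rv borel_measurable_nth])
  have dev_sets: "dev z \<in> sets M" for z
    by (cases z) (simp add: dev_def)
  have dev_le: "measure M (dev z) \<le> 2 * exp (- c0 * t)" if "z \<in> idx" for z
  proof -
    obtain j s e d where z: "z = (j, s, e, d)" by (cases z)
    have j: "j \<in> {1..m}" using that by (simp add: idx_def z)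
    show ?thesis
    proof (cases "l (j - 1) < s \<and> s \<le> e \<and> e \<le> l j")
      case True
      then have "dev z = {\<omega>\<in>space M. t * real (Suc e - s) < (\<Sum>i=s..e. Y i \<omega> $ d - \<mu> j $ d)\<^sup>2}"
        by (simp add: dev_def z)
      also have "measure M \<dots> \<le> 2 * exp (- c0 * t)"
      proof (rule prob_block_sum_sq_gt_le[OF \<open>prob_space M\<close> rv ind])
        show "{s..e} \<subseteq> {1..N}" using True l_le[OF j] by auto
        show "\<And>i. i \<in> {s..e} \<Longrightarrow> distr M borel (Y i) = G j" using True j dist by auto
      qed (use True j subgauss \<open>0 < t\<close> in auto)
      finally show ?thesis .
    next
      case False
      then have "dev z = {}" by (auto simp: dev_def z)
      then show ?thesis by simp
    qed
  qed
  have "{\<omega>\<in>space M. \<not> blocks_concentrated l \<mu> m t (\<lambda>i. Y i \<omega>)} \<subseteq> (\<Union>z\<in>idx. dev z)"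
    using l_le by (force simp: blocks_concentrated_def dev_def idx_def not_le)
  then have "measure M {\<omega>\<in>space M. \<not> blocks_concentrated l \<mu> m t (\<lambda>i. Y i \<omega>)}
      \<le> measure M (\<Union>z\<in>idx. dev z)"
    by (intro finite_measure_mono) (auto simp: idx_def dev_sets)
  also have "\<dots> \<le> (\<Sum>z\<in>idx. measure M (dev z))"
    by (rule measure_UNION_le) (auto simp: idx_def dev_sets)
  also have "\<dots> \<le> (\<Sum>z\<in>idx. 2 * exp (- c0 * t))"
    by (rule sum_mono) (rule dev_le)
  also have "\<dots> = real (m * N * N * CARD('d)) * (2 * exp (- c0 * t))"
    by (simp add: idx_def card_cartesian_product)
  finally show ?thesis .
qed

lemma AE_eventually_mono:
  assumes "AE x in M. eventually (\<lambda>N. P N x) sequentially"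
    and "\<And>N x. x \<in> space M \<Longrightarrow> N1 \<le> N \<Longrightarrow> P N x \<Longrightarrow> Q N x"
  shows "AE x in M. eventually (\<lambda>N. Q N x) sequentially"
  using assms(1)
proof (rule AE_mp, intro AE_I2 impI)
  fix x assume x: "x \<in> space M" and ev: "eventually (\<lambda>N. P N x) sequentially"
  from ev eventually_ge_at_top[of N1] show "eventually (\<lambda>N. Q N x) sequentially"
    by eventually_elim (use assms(2) x in blast)
qed

lemma AE_eventually_blocks_concentrated:
  fixes M :: "'a measure" and X :: "nat \<Rightarrow> nat \<Rightarrow> 'a \<Rightarrow> real^'d" and L :: "nat \<Rightarrow> nat \<Rightarrow> nat"
  assumes "prob_space M" and "0 < c0"
    and rv: "\<And>N i. X N i \<in> borel_measurable M"
    and ind: "\<And>N. N \<ge> N0 \<Longrightarrow> prob_space.indep_vars M (\<lambda>_. borel) (X N) {1..N}"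
    and L_le: "\<And>N j. N \<ge> N0 \<Longrightarrow> j \<in> {1..m} \<Longrightarrow> L N j \<le> N"
    and dist: "\<And>N j i. N \<ge> N0 \<Longrightarrow> j \<in> {1..m} \<Longrightarrow> L N (j - 1) < i \<Longrightarrow> i \<le> L N j \<Longrightarrow>
                 distr M borel (X N i) = G j"
    and subgauss: "\<And>j d n a. j \<in> {1..m} \<Longrightarrow> n \<ge> 1 \<Longrightarrow> a > 0 \<Longrightarrow>
        measure (PiM {..<n} (\<lambda>_. G j))
          {z \<in> space (PiM {..<n} (\<lambda>_. G j)). \<bar>(\<Sum>i<n. z i $ d) / real n - \<mu> j $ d\<bar> \<ge> a}
        \<le> 2 * exp (- c0 * a\<^sup>2 * real n)"
  shows "AE \<omega> in M. eventually (\<lambda>N.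
           blocks_concentrated (L N) \<mu> m (4 * ln (real N) / c0) (\<lambda>i. X N i \<omega>)) sequentially"
proof -
  interpret prob_space M by fact
  define bad where "bad N =
    {\<omega>\<in>space M. \<not> blocks_concentrated (L N) \<mu> m (4 * ln (real N) / c0) (\<lambda>i. X N i \<omega>)}" for N
  have [measurable]: "\<And>N i. X N i \<in> borel_measurable M" by (rule rv)
  have bad_sets: "bad N \<in> sets M" for N
    unfolding bad_def by measurable
  have bad_le: "measure M (bad N) \<le> 2 * real (m * CARD('d)) * inverse ((real N)\<^sup>2)"
    if "max N0 2 \<le> N" for N
  proof -
    have "real N ^ 4 = exp (ln (real N ^ 4))" using that by simp
    also have "\<dots> = exp (4 * ln (real N))" using that by (simp add: ln_realpow)
    finally have exp_eq: "exp (- c0 * (4 * ln (real N) / c0)) = inverse (real N ^ 4)"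
      using \<open>0 < c0\<close> by (simp add: exp_minus)
    have "measure M (bad N)
        \<le> real (m * N * N * CARD('d)) * (2 * exp (- c0 * (4 * ln (real N) / c0)))"
      unfolding bad_def
    proof (rule prob_not_blocks_concentrated_le[OF \<open>prob_space M\<close> rv ind L_le dist subgauss])
      show "N0 \<le> N" "N0 \<le> N" "N0 \<le> N" using that by simp_all
      show "0 < 4 * ln (real N) / c0" using that \<open>0 < c0\<close> by simp
    qed
    also have "\<dots> = 2 * real (m * CARD('d)) * inverse ((real N)\<^sup>2)"
      unfolding exp_eq using that by (simp add: power2_eq_square power4_eq_xxxx field_simps)
    finally show ?thesis .
  qed
  have "\<exists>N1. \<forall>N\<ge>N1. norm (measure M (bad N)) \<le> 2 * real (m * CARD('d)) * inverse ((real N)\<^sup>2)"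
    using bad_le by (intro exI[of _ "max N0 2"]) simp
  moreover have "summable (\<lambda>N. 2 * real (m * CARD('d)) * inverse ((real N)\<^sup>2))"
    by (intro summable_mult inverse_power_summable) simp
  ultimately have "summable (\<lambda>N. measure M (bad N))"
    by (rule summable_comparison_test)
  then have "AE \<omega> in M. eventually (\<lambda>N. \<omega> \<in> space M - bad N) sequentially"
    by (intro borel_cantelli_AE1 bad_sets) (simp_all add: emeasure_eq_measure)
  then show ?thesis
    by (elim AE_mp) (auto simp: bad_def elim: eventually_mono)
qed

lemma le_of_Suc_less_upto:
  fixes l :: "nat \<Rightarrow> 'b::order"
  assumes step: "\<forall>j\<le>m. l j < l (Suc j)" and "i \<le> j" "j \<le> Suc m"
  shows "l i \<le> l j"
  using assms(2,3)
proof (induction j)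
  case (Suc j)
  then show ?case
    using step by (cases "i = Suc j") (auto intro: order.trans less_imp_le)
qed simp

theorem lemma6:
  fixes M :: "'a measure"
    and X :: "nat \<Rightarrow> nat \<Rightarrow> 'a \<Rightarrow> real^'d"
    and L :: "nat \<Rightarrow> nat \<Rightarrow> nat"
    and M0 :: nat and N0 :: nat
    and G :: "nat \<Rightarrow> (real^'d) measure"
    and \<mu> :: "nat \<Rightarrow> real^'d"
    and c0 :: real and C :: real
    and Mmax :: nat and f :: "nat \<Rightarrow> real" and \<beta> :: "nat \<Rightarrow> nat"
    and k :: nat and \<eta> :: "nat \<Rightarrow> nat"
    and out :: "nat \<Rightarrow> 'a \<Rightarrow> nat \<times> (nat \<Rightarrow> nat)"
  assumes P: "prob_space M"
    \<comment> \<open>model (M.2)\<close>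
    and M0: "M0 > 1"
    and L_struct: "\<forall>N\<ge>N0. L N 0 = 0 \<and> L N (Suc M0) = N \<and> (\<forall>j\<le>M0. L N j < L N (Suc j))"
    and seg_inf: "\<forall>j\<in>{1..Suc M0}. filterlim (\<lambda>N. L N j - L N (j - 1)) at_top sequentially"
    and rv: "\<forall>N n. X N n \<in> borel_measurable M"
    and indep: "\<forall>N\<ge>N0. prob_space.indep_vars M (\<lambda>_. borel) (X N) {1..N}"
    and distr_X: "\<forall>N\<ge>N0. \<forall>j\<in>{1..Suc M0}. \<forall>n. L N (j - 1) < n \<and> n \<le> L N j \<longrightarrow>
                    distr M borel (X N n) = G j"
    and G_prob: "\<forall>j\<in>{1..Suc M0}. prob_space (G j)"
    and G_mean: "\<forall>j\<in>{1..Suc M0}. integrable (G j) (\<lambda>x. x) \<and> \<mu> j = (\<integral>x. x \<partial>G j)"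
    and G_cov: "\<forall>j\<in>{1..Suc M0}. integrable (G j) (\<lambda>x. (norm x)\<^sup>2)"
    and mu_change: "\<forall>j\<in>{1..M0}. \<mu> j \<noteq> \<mu> (Suc j)"
    \<comment> \<open>(A.4)\<close>
    and c0: "c0 > 0"
    and subgauss: "\<forall>j\<in>{1..Suc M0}. \<forall>d. \<forall>n\<ge>1. \<forall>a>0.
        measure (PiM {..<n} (\<lambda>_. G j))
          {z \<in> space (PiM {..<n} (\<lambda>_. G j)).
             \<bar>(\<Sum>i<n. z i $ d) / real n - \<mu> j $ d\<bar> \<ge> a}
        \<le> 2 * exp (- c0 * a\<^sup>2 * real n)"
    \<comment> \<open>Algorithm 2 applied to X_1, ..., X_N (any choice of minimizers / argmin)\<close>
    and Mmax: "Mmax \<ge> 1"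
    and f_pos: "\<forall>N. f N > 0"
    and out_alg: "\<forall>N\<ge>N0. \<forall>\<omega>\<in>space M.
        alg2_output Mmax (f N) (\<beta> N) N (\<lambda>n. X N n \<omega>) (fst (out N \<omega>)) (snd (out N \<omega>))"
    and k: "2 \<le> k" "k \<le> M0"
    and eta: "\<forall>N\<ge>N0. 1 \<le> \<eta> N \<and> \<eta> N \<le> L N (k - 1) - L N (k - 2)
                      \<and> \<eta> N \<le> L N (Suc k) - L N k"
    and C: "C > 100 * real CARD('d) / c0"
    and f_big: "\<forall>N. f N \<ge> 100 * (norm (\<mu> (k - 1) - \<mu> k))\<^sup>2 * real (\<eta> N)
                 \<and> f N \<ge> 100 * (norm (\<mu> k - \<mu> (Suc k)))\<^sup>2 * real (\<eta> N)
                 \<and> f N \<ge> C * ln (real N)"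
  shows "AE \<omega> in M. eventually (\<lambda>N. \<not> (\<exists>j n1 n2 n3.
            1 \<le> j \<and> j \<le> fst (out N \<omega>) \<and>
            1 \<le> n1 \<and> n1 \<le> L N k - L N (k - 1) \<and>
            1 \<le> n2 \<and> n2 \<le> \<eta> N \<and> 1 \<le> n3 \<and> n3 \<le> \<eta> N \<and>
            snd (out N \<omega>) (j - 1) = L N (k - 1) - n3 \<and>
            snd (out N \<omega>) j = L N (k - 1) + n1 \<and>
            snd (out N \<omega>) (Suc j) = L N k + n2)) sequentially"
proof -
  have L_le: "L N j \<le> N" if "N \<ge> N0" "j \<in> {1..Suc M0}" for N j
    using le_of_Suc_less_upto[of M0 "L N" j "Suc M0"] L_struct that by auto
  have conc: "AE \<omega> in M. eventually (\<lambda>N.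
      blocks_concentrated (L N) \<mu> (Suc M0) (4 * ln (real N) / c0) (\<lambda>i. X N i \<omega>)) sequentially"
    by (rule AE_eventually_blocks_concentrated[OF P c0 _ _ L_le])
       (use rv indep distr_X subgauss in auto)
  have pen_big: "6 * (real CARD('d) * (4 * ln (real N) / c0))
      + 3 * real (\<eta> N) * (norm (\<mu> (k - 1) - \<mu> k))\<^sup>2
      + 3 * real (\<eta> N) * (norm (\<mu> (Suc k) - \<mu> k))\<^sup>2 < f N" if "1 \<le> N" for N
  proof -
    have "6 * (real CARD('d) * (4 * ln (real N) / c0)) = 6 / 25 * (100 * real CARD('d) / c0 * ln (real N))"
      by simp
    also have "\<dots> \<le> 6 / 25 * (C * ln (real N))"
      using C that by (intro mult_left_mono mult_right_mono) auto
    finally show ?thesis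
      using f_big[rule_format, of N] f_pos[rule_format, of N]
      by (simp add: norm_minus_commute[of "\<mu> (Suc k)"] mult_ac)
  qed
  have no_pair: "\<not> (\<exists>j n1 n2 n3.
            1 \<le> j \<and> j \<le> fst (out N \<omega>) \<and>
            1 \<le> n1 \<and> n1 \<le> L N k - L N (k - 1) \<and>
            1 \<le> n2 \<and> n2 \<le> \<eta> N \<and> 1 \<le> n3 \<and> n3 \<le> \<eta> N \<and>
            snd (out N \<omega>) (j - 1) = L N (k - 1) - n3 \<and>
            snd (out N \<omega>) j = L N (k - 1) + n1 \<and>
            snd (out N \<omega>) (Suc j) = L N k + n2)"
    if "\<omega> \<in> space M" "max N0 2 \<le> N"
      and "blocks_concentrated (L N) \<mu> (Suc M0) (4 * ln (real N) / c0) (\<lambda>i. X N i \<omega>)" for N \<omega>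
  proof (rule alg2_output_no_pair_around_segment[where l="L N" and \<eta>="\<eta> N"])
    show "alg2_output Mmax (f N) (\<beta> N) N (\<lambda>n. X N n \<omega>) (fst (out N \<omega>)) (snd (out N \<omega>))"
      using out_alg that by simp
  qed (use that k eta pen_big[of N] in auto)
  show ?thesis
    by (rule AE_eventually_mono[OF conc no_pair])
qed

end
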